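(* For every finite simple graph $G$ and every integer $n\ge 2$, $$\chi_i(S_G^2)\le \chi_i(S_G^n)\le \chi_i(S_G^2)+1.$$
   Context: For a graph $H$, an injective $k$-coloring is a map $f:V(H)\to\{1,\dots,k\}$ such that any two distinct vertices $u,w$ with $f(u)=f(w)$ have no common neighbor. The injective chromatic number $\chi_i(H)$ is the least $k$ for which $H$ admits an injective $k$-coloring. For a graph $G$ and a positive integer $n$, the generalized Sierpiński graph $S_G^n$ has vertex set $V(G)^n$, and two vertices $(u_1,\dots,u_n)$, $(v_1,\dots,v_n)$ are adjacent if and only if there is $d\in\{1,\dots,n\}$ such that $u_i=v_i$ for all $i<d$, $u_dv_d\in E(G)$, and $u_i=v_d$ and $v_i=u_d$ for all $i>d$. (In particular $S_G^1\cong G$.) *)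

theory Defs
  imports Main
begin

definition simple_graph :: "'a set \<Rightarrow> ('a \<Rightarrow> 'a \<Rightarrow> bool) \<Rightarrow> bool" where
  "simple_graph V E \<longleftrightarrow> finite V \<and> (\<forall>u v. E u v \<longrightarrow> u \<in> V \<and> v \<in> V)
     \<and> (\<forall>u v. E u v \<longrightarrow> E v u) \<and> (\<forall>u. \<not> E u u)"

definition injective_coloring ::
  "'a set \<Rightarrow> ('a \<Rightarrow> 'a \<Rightarrow> bool) \<Rightarrow> nat \<Rightarrow> ('a \<Rightarrow> nat) \<Rightarrow> bool" where
  "injective_coloring V E k f \<longleftrightarrow> (\<forall>v\<in>V. f v \<in> {1..k})
     \<and> (\<forall>u\<in>V. \<forall>w\<in>V. u \<noteq> w \<and> f u = f w \<longrightarrow> \<not> (\<exists>x\<in>V. E u x \<and> E w x))"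

definition inj_chrom :: "'a set \<Rightarrow> ('a \<Rightarrow> 'a \<Rightarrow> bool) \<Rightarrow> nat" where
  "inj_chrom V E = (LEAST k. \<exists>f. injective_coloring V E k f)"

text \<open>Generalized Sierpinski graph S_G^n: vertices are words of length n over V (lists,
  0-indexed); u ~ v iff there is d < n with equal prefixes before d, E (u!d) (v!d),
  and u!i = v!d, v!i = u!d for all d < i < n.\<close>
definition sier_verts :: "'a set \<Rightarrow> nat \<Rightarrow> 'a list set" where
  "sier_verts V n = {xs. length xs = n \<and> set xs \<subseteq> V}"

definition sier_adj :: "('a \<Rightarrow> 'a \<Rightarrow> bool) \<Rightarrow> nat \<Rightarrow> 'a list \<Rightarrow> 'a list \<Rightarrow> bool" where
  "sier_adj E n u v \<longleftrightarrow> length u = n \<and> length v = n \<and>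
     (\<exists>d<n. (\<forall>i<d. u ! i = v ! i) \<and> E (u ! d) (v ! d) \<and>
        (\<forall>i. d < i \<and> i < n \<longrightarrow> u ! i = v ! d \<and> v ! i = u ! d))"

end

theory Submission
  imports Defs
begin

(* Prefixing a fixed word of length n - 2 maps S_G^2 injectively and edge-preservingly into
   S_G^n, so injective colourings of S_G^n restrict to S_G^2.
   Conversely, colour a word of S_G^n by the colour of its last two letters in an optimal
   injective colouring of S_G^2, and use one new colour for the words whose last two letters
   coincide. Two words whose last two letters differ and which share a neighbour x agree with x
   before the last two positions, so their suffixes are distinct and share the neighbour given by
   the suffix of x. Two words ending in a repeated letter never share a neighbour x: irreflexivity
   of E forces both to be adjacent to x at the same position (the last position at which x
   differs from its final letter, or the last position if x ends in two distinct letters), and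
   that position together with x determines the word. *)

lemma inj_chrom_le:
  "injective_coloring V E k f \<Longrightarrow> inj_chrom V E \<le> k"
  unfolding inj_chrom_def by (rule Least_le) (rule exI)

lemma injective_coloring_card:
  assumes "finite V"
  shows "\<exists>f. injective_coloring V E (card V) f"
proof -
  obtain h where h: "bij_betw h V {0..<card V}"
    using ex_bij_betw_finite_nat[OF assms] by blast
  then have "injective_coloring V E (card V) (\<lambda>v. Suc (h v))"
    unfolding injective_coloring_def bij_betw_def inj_on_def by (auto simp: Suc_le_eq)
  then show ?thesis by blast
qed

lemma injective_coloring_inj_chrom:
  assumes "finite V"
  obtains f where "injective_coloring V E (inj_chrom V E) f"
  using LeastI_ex[of "\<lambda>k. \<exists>f. injective_coloring V E k f"] injective_coloring_card[OF assms]
  unfolding inj_chrom_def by blast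

lemma inj_chrom_le_of_embedding:
  assumes "finite V'" "inj_on h V" "h ` V \<subseteq> V'"
    and "\<And>u v. u \<in> V \<Longrightarrow> v \<in> V \<Longrightarrow> E u v \<Longrightarrow> E' (h u) (h v)"
  shows "inj_chrom V E \<le> inj_chrom V' E'"
proof -
  obtain f where f: "injective_coloring V' E' (inj_chrom V' E') f"
    using injective_coloring_inj_chrom[OF assms(1)] .
  have "injective_coloring V E (inj_chrom V' E') (f \<circ> h)"
    using f assms(2-4) unfolding injective_coloring_def inj_on_def image_subset_iff
    by (metis comp_apply)
  then show ?thesis by (rule inj_chrom_le)
qed

lemma inj_chrom_le_Suc_of_projection:
  assumes "finite V'" "p ` (V - R) \<subseteq> V'"
    and R: "\<And>u u' x. \<lbrakk>u \<in> V \<inter> R; u' \<in> V \<inter> R; x \<in> V; E u x; E u' x\<rbrakk> \<Longrightarrow> u = u'"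
    and p: "\<And>u u' x. \<lbrakk>u \<in> V - R; u' \<in> V - R; x \<in> V; E u x; E u' x; u \<noteq> u'\<rbrakk>
              \<Longrightarrow> p u \<noteq> p u' \<and> (\<exists>y\<in>V'. E' (p u) y \<and> E' (p u') y)"
  shows "inj_chrom V E \<le> inj_chrom V' E' + 1"
proof -
  define k where "k = inj_chrom V' E'"
  obtain g where g: "injective_coloring V' E' k g"
    using injective_coloring_inj_chrom[OF assms(1)] unfolding k_def .
  define f where "f u = (if u \<in> R then k + 1 else g (p u))" for u
  have "injective_coloring V E (k + 1) f"
    unfolding injective_coloring_def
  proof (intro conjI ballI impI notI)
    fix v assume "v \<in> V"
    then show "f v \<in> {1..k + 1}"
      using g assms(2) unfolding f_def injective_coloring_def by fastforce
  next
    fix u u' assume u: "u \<in> V" "u' \<in> V" "u \<noteq> u' \<and> f u = f u'"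
      and "\<exists>x\<in>V. E u x \<and> E u' x"
    then obtain x where x: "x \<in> V" "E u x" "E u' x" by blast
    have gk: "g (p v) \<in> {1..k}" if "v \<in> V - R" for v
      using g assms(2) that unfolding injective_coloring_def by blast
    consider "u \<in> R" "u' \<in> R" | "u \<notin> R" "u' \<notin> R" | "(u \<in> R) \<noteq> (u' \<in> R)" by blast
    then show False
    proof cases
      case 1
      then show False using R[OF _ _ x] u by blast
    next
      case 2
      then have "p u \<noteq> p u'" "\<exists>y\<in>V'. E' (p u) y \<and> E' (p u') y" "g (p u) = g (p u')"
        using p[OF _ _ x] u unfolding f_def by auto
      then show False using g assms(2) u 2 unfolding injective_coloring_def by blast
    next
      case 3
      then show False using u gk[of u] gk[of u'] unfolding f_def by (auto split: if_splits)
    qed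
  qed
  then show ?thesis unfolding k_def by (rule inj_chrom_le)
qed

lemma finite_sier_verts: "finite V \<Longrightarrow> finite (sier_verts V n)"
proof -
  assume "finite V"
  have "sier_verts V n = {xs. set xs \<subseteq> V \<and> length xs = n}"
    unfolding sier_verts_def by blast
  then show ?thesis using finite_lists_length_eq[OF \<open>finite V\<close>] by simp
qed

lemma append_in_sier_verts:
  "set w \<subseteq> V \<Longrightarrow> u \<in> sier_verts V k \<Longrightarrow> w @ u \<in> sier_verts V (length w + k)"
  unfolding sier_verts_def by auto

lemma drop_in_sier_verts: "u \<in> sier_verts V n \<Longrightarrow> drop m u \<in> sier_verts V (n - m)"
  unfolding sier_verts_def by (auto dest: in_set_dropD)

definition sier_adj_at :: "('a \<Rightarrow> 'a \<Rightarrow> bool) \<Rightarrow> nat \<Rightarrow> nat \<Rightarrow> 'a list \<Rightarrow> 'a list \<Rightarrow> bool" where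
  "sier_adj_at E n d u v \<longleftrightarrow> length u = n \<and> length v = n \<and> d < n \<and>
     (\<forall>i<d. u ! i = v ! i) \<and> E (u ! d) (v ! d) \<and>
     (\<forall>i. d < i \<and> i < n \<longrightarrow> u ! i = v ! d \<and> v ! i = u ! d)"

lemma sier_adj_iff_ex_sier_adj_at: "sier_adj E n u v \<longleftrightarrow> (\<exists>d. sier_adj_at E n d u v)"
  unfolding sier_adj_def sier_adj_at_def by blast

lemma sier_adj_at_append:
  assumes "sier_adj_at E k d u v"
  shows "sier_adj_at E (length w + k) (length w + d) (w @ u) (w @ v)"
  unfolding sier_adj_at_def
proof (intro conjI allI impI)
  fix i assume "length w + d < i \<and> i < length w + k"
  then obtain j where "i = length w + j" "d < j" "j < k"
    by (intro that[of "i - length w"]) auto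
  then show "(w @ u) ! i = (w @ v) ! (length w + d)" "(w @ v) ! i = (w @ u) ! (length w + d)"
    using assms unfolding sier_adj_at_def by (simp_all add: nth_append)
qed (use assms in \<open>auto simp: sier_adj_at_def nth_append\<close>)

lemma sier_adj_at_drop:
  assumes "sier_adj_at E n d u v" "m \<le> d"
  shows "take m u = take m v \<and> sier_adj_at E (n - m) (d - m) (drop m u) (drop m v)"
proof
  from assms show "take m u = take m v"
    unfolding sier_adj_at_def by (intro nth_equalityI) auto
  show "sier_adj_at E (n - m) (d - m) (drop m u) (drop m v)"
    unfolding sier_adj_at_def
  proof (intro conjI allI impI)
    fix i assume "d - m < i \<and> i < n - m"
    then have "d < m + i \<and> m + i < n" using assms(2) by linarith
    then show "drop m u ! i = drop m v ! (d - m)" "drop m v ! i = drop m u ! (d - m)"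
      using assms unfolding sier_adj_at_def by auto
  qed (use assms in \<open>auto simp: sier_adj_at_def\<close>)
qed

lemma sier_adj_at_unique:
  assumes "sier_adj_at E n d u x" "sier_adj_at E n d u' x" "u ! d = u' ! d"
  shows "u = u'"
proof (rule nth_equalityI)
  show "length u = length u'" using assms unfolding sier_adj_at_def by simp
  fix i assume "i < length u"
  then consider "i < d" | "i = d" | "d < i \<and> i < n" using assms(1) unfolding sier_adj_at_def by fastforce
  then show "u ! i = u' ! i" using assms unfolding sier_adj_at_def by cases auto
qed

lemma sier_adj_append:
  "sier_adj E k u v \<Longrightarrow> sier_adj E (length w + k) (w @ u) (w @ v)"
  unfolding sier_adj_iff_ex_sier_adj_at using sier_adj_at_append by blast

lemma sier_adj_drop_last_two:
  assumes "sier_adj E n u v" "2 \<le> n" "u ! (n - 2) \<noteq> u ! (n - 1)"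
  shows "take (n - 2) u = take (n - 2) v \<and> sier_adj E 2 (drop (n - 2) u) (drop (n - 2) v)"
proof -
  obtain d where d: "sier_adj_at E n d u v"
    using assms(1) unfolding sier_adj_iff_ex_sier_adj_at by blast
  have "n - 2 \<le> d"
  proof (rule ccontr)
    assume "\<not> n - 2 \<le> d"
    then have "u ! (n - 2) = v ! d" "u ! (n - 1) = v ! d"
      using d unfolding sier_adj_at_def by auto
    then show False using assms(3) by simp
  qed
  moreover have "n - (n - 2) = 2" using assms(2) by simp
  ultimately show ?thesis
    using sier_adj_at_drop[OF d] unfolding sier_adj_iff_ex_sier_adj_at by metis
qed

lemma sier_common_neighbour_drop_last_two:
  assumes "sier_adj E n u x" "sier_adj E n u' x" "2 \<le> n" "u \<noteq> u'"
    and "u ! (n - 2) \<noteq> u ! (n - 1)" "u' ! (n - 2) \<noteq> u' ! (n - 1)"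
  shows "drop (n - 2) u \<noteq> drop (n - 2) u'
    \<and> sier_adj E 2 (drop (n - 2) u) (drop (n - 2) x) \<and> sier_adj E 2 (drop (n - 2) u') (drop (n - 2) x)"
  using sier_adj_drop_last_two[OF assms(1,3,5)] sier_adj_drop_last_two[OF assms(2,3,6)] assms(4)
  by (metis append_take_drop_id)

lemma sier_adj_at_position_unique:
  assumes irrefl: "\<And>a. \<not> E a a"
    and "sier_adj_at E n d u x" "sier_adj_at E n d' u' x" "d < n - 1" "d' < n - 1"
  shows "d = d'"
proof -
  have False if "sier_adj_at E n d u x" "sier_adj_at E n d' u' x" "d < d'" "d' < n - 1"
    for d d' u u'
  proof -
    have "x ! d' = u ! d" "x ! (n - 1) = u ! d" "u' ! d' = x ! (n - 1)"
      using that unfolding sier_adj_at_def by auto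
    then show False using that(2) irrefl unfolding sier_adj_at_def by metis
  qed
  then show ?thesis using assms(2-5) by (metis linorder_neqE_nat)
qed

lemma sier_adj_repeat_ending_position:
  assumes irrefl: "\<And>a. \<not> E a a"
    and d: "sier_adj_at E n d u x" and "2 \<le> n" "u ! (n - 2) = u ! (n - 1)"
  shows "d = n - 1 \<longleftrightarrow> x ! (n - 2) \<noteq> x ! (n - 1)"
proof (cases "d = n - 1")
  case True
  then have "u ! (n - 2) = x ! (n - 2)" "E (u ! (n - 1)) (x ! (n - 1))"
    using d assms(3) unfolding sier_adj_at_def by auto
  then show ?thesis using True assms(4) irrefl by metis
next
  case False
  have "d \<noteq> n - 2"
  proof
    assume "d = n - 2"
    then have "u ! (n - 1) = x ! d" "E (u ! d) (x ! d)"
      using d assms(3) unfolding sier_adj_at_def by auto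
    then show False using \<open>d = n - 2\<close> assms(4) irrefl by metis
  qed
  with False have "d < n - 2" using d unfolding sier_adj_at_def by auto
  then have "x ! (n - 2) = u ! d" "x ! (n - 1) = u ! d"
    using d unfolding sier_adj_at_def by simp_all
  then show ?thesis using False by simp
qed

lemma sier_common_neighbour_repeat_ending_unique:
  assumes irrefl: "\<And>a. \<not> E a a"
    and "sier_adj E n u x" "sier_adj E n u' x" "2 \<le> n"
    and "u ! (n - 2) = u ! (n - 1)" "u' ! (n - 2) = u' ! (n - 1)"
  shows "u = u'"
proof -
  obtain d d' where d: "sier_adj_at E n d u x" and d': "sier_adj_at E n d' u' x"
    using assms(2,3) unfolding sier_adj_iff_ex_sier_adj_at by blast
  note pos = sier_adj_repeat_ending_position[OF irrefl d assms(4,5)]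
    sier_adj_repeat_ending_position[OF irrefl d' assms(4,6)]
  show ?thesis
  proof (cases "x ! (n - 2) = x ! (n - 1)")
    case True
    then have "d < n - 1" "d' < n - 1"
      using pos d d' unfolding sier_adj_at_def by auto
    then have "d' = d" "u ! d = x ! (n - 1)" "u' ! d = x ! (n - 1)"
      using sier_adj_at_position_unique[OF irrefl d d'] d d' unfolding sier_adj_at_def by auto
    then show ?thesis using sier_adj_at_unique[OF d] d' by simp
  next
    case False
    then have "d = n - 1" "d' = n - 1" using pos by simp_all
    then have "u ! d = x ! (n - 2)" "u' ! d = x ! (n - 2)"
      using d d' assms(4-6) unfolding sier_adj_at_def by auto
    then show ?thesis using sier_adj_at_unique[OF d] d' \<open>d = n - 1\<close> \<open>d' = n - 1\<close> by simp
  qed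
qed

lemma inj_chrom_sier_mono:
  assumes "finite V" "0 < k" "k \<le> n"
  shows "inj_chrom (sier_verts V k) (sier_adj E k) \<le> inj_chrom (sier_verts V n) (sier_adj E n)"
proof -
  define w where "w = replicate (n - k) (SOME a. a \<in> V)"
  have n: "length w + k = n" using assms(3) unfolding w_def by simp
  have "w @ u \<in> sier_verts V n" if "u \<in> sier_verts V k" for u
  proof -
    from that assms(2) have "V \<noteq> {}" unfolding sier_verts_def by (cases u) auto
    then have "set w \<subseteq> V" unfolding w_def by (simp add: set_replicate_conv_if some_in_eq)
    then show ?thesis using append_in_sier_verts[OF _ that] n by metis
  qed
  moreover have "sier_adj E n (w @ u) (w @ v)" if "sier_adj E k u v" for u v
    using sier_adj_append[OF that, of w] n by simp
  ultimately show ?thesis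
    using finite_sier_verts[OF assms(1)]
    by (intro inj_chrom_le_of_embedding[where h = "(@) w"]) (auto simp: inj_on_def)
qed

lemma inj_chrom_sier_le_Suc:
  assumes "finite V" "\<And>a. \<not> E a a" "2 \<le> n"
  shows "inj_chrom (sier_verts V n) (sier_adj E n) \<le> inj_chrom (sier_verts V 2) (sier_adj E 2) + 1"
proof (rule inj_chrom_le_Suc_of_projection[OF finite_sier_verts[OF assms(1)],
      where R = "{u. u ! (n - 2) = u ! (n - 1)}"])
  have drop: "drop (n - 2) u \<in> sier_verts V 2" if "u \<in> sier_verts V n" for u
    using drop_in_sier_verts[OF that, of "n - 2"] assms(3) by simp
  then show "drop (n - 2) ` (sier_verts V n - {u. u ! (n - 2) = u ! (n - 1)}) \<subseteq> sier_verts V 2"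
    by blast
  fix u u' x assume "x \<in> sier_verts V n" "sier_adj E n u x" "sier_adj E n u' x" "u \<noteq> u'"
    and "u \<in> sier_verts V n - {u. u ! (n - 2) = u ! (n - 1)}"
    and "u' \<in> sier_verts V n - {u. u ! (n - 2) = u ! (n - 1)}"
  then show "drop (n - 2) u \<noteq> drop (n - 2) u'
    \<and> (\<exists>y\<in>sier_verts V 2. sier_adj E 2 (drop (n - 2) u) y \<and> sier_adj E 2 (drop (n - 2) u') y)"
    using sier_common_neighbour_drop_last_two[OF _ _ assms(3)] drop by blast
qed (use sier_common_neighbour_repeat_ending_unique[where E = E, OF assms(2) _ _ assms(3)] in auto)

theorem mainTheorem1:
  fixes V :: "'a set" and E :: "'a \<Rightarrow> 'a \<Rightarrow> bool" and n :: nat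
  assumes "simple_graph V E" and "n \<ge> 2"
  shows "inj_chrom (sier_verts V 2) (sier_adj E 2) \<le> inj_chrom (sier_verts V n) (sier_adj E n)
       \<and> inj_chrom (sier_verts V n) (sier_adj E n) \<le> inj_chrom (sier_verts V 2) (sier_adj E 2) + 1"
proof -
  have fin: "finite V" and irrefl: "\<And>a. \<not> E a a"
    using assms(1) unfolding simple_graph_def by blast+
  show ?thesis
    using inj_chrom_sier_mono[of V 2 n E] inj_chrom_sier_le_Suc[of V E n] fin irrefl assms(2)
    by simp
qed

end
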